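(* Assume the model, Assumption (B), Assumption (K) and Assumption (S) below, and suppose the parameters $\theta_1,\dots,\theta_K$ are known. Let the policy be MaxWeight: at each time $t$, $$\{S_{k,t}\}_{k\in[K]}\in\operatorname{argmax}_{(S_1,\dots,S_K)\in\mathcal M(\mathcal N_t)}\sum_{k\in[K]}\sum_{n\in S_k}Q_n(t)\,\mu(n\mid S_k,\theta_k).$$ Then there is an absolute constant $C>0$ such that for every horizon $T\ge1$, $$\mathcal Q(T)\le C\,\frac{\min\{N,K\}}{\epsilon},$$ i.e. $\mathcal Q(T)=O(\min\{N,K\}/\epsilon)$; in particular the system is stable: $\lim_{T\to\infty}\mathcal Q(T)<\infty$.
   Context: Model. Fix integers $N,K,L,d\ge1$ with $N\le KL$. Agents (queues) $n\in[N]$ have known feature vectors $x_n\in\mathbb R^d$; arms (servers) $k\in[K]$ have unknown parameters $\theta_k\in\mathbb R^d$. For $S\subseteq[N]$, $\theta\in\mathbb R^d$ and $n\in S$, the multinomial logit (MNL) probabilities are $\mu(n\mid S,\theta)=\frac{\exp(x_n^\top\theta)}{1+\sum_{m\in S}\exp(x_m^\top\theta)}$ and, for the null agent $n_0$, $\mu(n_0\mid S,\theta)=\frac{1}{1+\sum_{m\in S}\exp(x_m^\top\theta)}$. For $\mathcal N\subseteq[N]$, $\mathcal M(\mathcal N)$ is the set of $K$-tuples $(S_1,\dots,S_K)$ of pairwise disjoint subsets of $\mathcal N$ with $|S_k|\le L$ for all $k$ and $\bigcup_k S_k=\mathcal N$. Dynamics: $Q_n(1)=0$ for all $n$. At each time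 $t=1,2,\dots$, let $\mathcal N_t=\{n\in[N]:Q_n(t)\neq0\}$; the policy chooses $(S_{1,t},\dots,S_{K,t})\in\mathcal M(\mathcal N_t)$ as a function of the past (features, past assortments and feedback, current queue lengths, internal randomness); for $n\in\mathcal N_t$, $k_{n,t}$ denotes the arm with $n\in S_{k_{n,t},t}$. Each arm $k$ independently accepts agent $n\in S_{k,t}$ with probability $\mu(n\mid S_{k,t},\theta_k)$ and accepts no one with probability $\mu(n_0\mid S_{k,t},\theta_k)$. $D_n(t)\in\{0,1\}$ indicates that $n$ was accepted ($D_n(t)=0$ if $n\notin\mathcal N_t$), and $y_{n,t}=D_n(t)$ is the observed feedback. Arrivals $A_n(t)\in\{0,1\}$ are Bernoulli($\lambda_n$), $\lambda_n\in[0,1]$ unknown, independent over $n$ and $t$ and of everything else. Queues evolve as $Q_n(t+1)=\max\{Q_n(t)+A_n(t)-D_n(t),0\}$. The average queue length is $\mathcal Q(T)=\frac1T\sum_{t=1}^T\sum_{n=1}^N\mathbb E[Q_n(t)]$. Assumption (B): $\|x_n\|_2\le1$ for all $n$ and $\|\theta_k\|_2\le1$ for all $k$. Assumption (K): there is $\kappa>0$ such that $\mu(n\mid S,\theta)\,\mu(n_0\mid S,\theta)\ge\kappa$ for all $S\subseteq[N]$ with $|S|\le L$, all $n\in S$ and all $\theta$ with $\|\theta\|_2\le1$. Assumption (S) (traffic slackness): there is $\epsilon\in(0,1)$ and $(S_1,\dots,S_K)\in\mathcal M([N])$ with $\lambda_n+\epsilon\le\mu(n\mid S_k,\theta_k)$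 for all $k\in[K]$ and all $n\in S_k$. *)

theory Defs
  imports "HOL-Probability.Probability"
begin

text \<open>Vectors in R^d are represented as functions nat => real, only coordinates i < d matter.
  Agents are 0..N-1, arms are 0..K-1.\<close>

definition ip :: "nat \<Rightarrow> (nat \<Rightarrow> real) \<Rightarrow> (nat \<Rightarrow> real) \<Rightarrow> real" where
  "ip d u v = (\<Sum>i<d. u i * v i)"

definition sqnorm :: "nat \<Rightarrow> (nat \<Rightarrow> real) \<Rightarrow> real" where
  "sqnorm d u = (\<Sum>i<d. (u i)\<^sup>2)"

definition mnl :: "nat \<Rightarrow> (nat \<Rightarrow> nat \<Rightarrow> real) \<Rightarrow> nat set \<Rightarrow> (nat \<Rightarrow> real) \<Rightarrow> nat \<Rightarrow> real" where
  "mnl d x S \<theta> n = exp (ip d (x n) \<theta>) / (1 + (\<Sum>m\<in>S. exp (ip d (x m) \<theta>)))"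

definition mnl0 :: "nat \<Rightarrow> (nat \<Rightarrow> nat \<Rightarrow> real) \<Rightarrow> nat set \<Rightarrow> (nat \<Rightarrow> real) \<Rightarrow> real" where
  "mnl0 d x S \<theta> = 1 / (1 + (\<Sum>m\<in>S. exp (ip d (x m) \<theta>)))"

text \<open>Choice of one arm offered the (finite) assortment S: Some n = accepts agent n, None = nobody.\<close>
definition mnl_choice :: "nat \<Rightarrow> (nat \<Rightarrow> nat \<Rightarrow> real) \<Rightarrow> nat set \<Rightarrow> (nat \<Rightarrow> real) \<Rightarrow> nat option pmf" where
  "mnl_choice d x S \<theta> = embed_pmf (\<lambda>r. case r of None \<Rightarrow> mnl0 d x S \<theta>
                                        | Some n \<Rightarrow> (if n \<in> S then mnl d x S \<theta> n else 0))"

definition assortments :: "nat \<Rightarrow> nat \<Rightarrow> nat set \<Rightarrow> (nat \<Rightarrow> nat set) set" where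
  "assortments K L A = {S. (\<forall>k<K. S k \<subseteq> A \<and> card (S k) \<le> L)
      \<and> (\<forall>k<K. \<forall>k'<K. k \<noteq> k' \<longrightarrow> S k \<inter> S k' = {})
      \<and> (\<Union>k<K. S k) = A \<and> (\<forall>k\<ge>K. S k = {})}"

definition active :: "nat \<Rightarrow> (nat \<Rightarrow> nat) \<Rightarrow> nat set" where
  "active N q = {n. n < N \<and> q n \<noteq> 0}"

definition mw_weight :: "nat \<Rightarrow> (nat \<Rightarrow> nat \<Rightarrow> real) \<Rightarrow> (nat \<Rightarrow> nat \<Rightarrow> real) \<Rightarrow> nat
     \<Rightarrow> (nat \<Rightarrow> nat) \<Rightarrow> (nat \<Rightarrow> nat set) \<Rightarrow> real" where
  "mw_weight d x \<theta> K q S = (\<Sum>k<K. \<Sum>n\<in>S k. real (q n) * mnl d x (S k) (\<theta> k) n)"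

definition maxweight_set :: "nat \<Rightarrow> (nat \<Rightarrow> nat \<Rightarrow> real) \<Rightarrow> (nat \<Rightarrow> nat \<Rightarrow> real) \<Rightarrow> nat \<Rightarrow> nat \<Rightarrow> nat
     \<Rightarrow> (nat \<Rightarrow> nat) \<Rightarrow> (nat \<Rightarrow> nat set) set" where
  "maxweight_set d x \<theta> N K L q =
     {S \<in> assortments K L (active N q).
        \<forall>S' \<in> assortments K L (active N q). mw_weight d x \<theta> K q S' \<le> mw_weight d x \<theta> K q S}"

text \<open>A state: the full past (queue vector, assortment, departures, arrivals) for each past round,
  together with the current queue vector.\<close>
type_synonym hist = "((nat \<Rightarrow> nat) \<times> (nat \<Rightarrow> nat set) \<times> (nat \<Rightarrow> bool) \<times> (nat \<Rightarrow> bool)) list \<times> (nat \<Rightarrow> nat)"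

definition step :: "nat \<Rightarrow> (nat \<Rightarrow> nat \<Rightarrow> real) \<Rightarrow> (nat \<Rightarrow> nat \<Rightarrow> real) \<Rightarrow> (nat \<Rightarrow> real) \<Rightarrow> nat \<Rightarrow> nat
     \<Rightarrow> (hist \<Rightarrow> (nat \<Rightarrow> nat set) pmf) \<Rightarrow> hist \<Rightarrow> hist pmf" where
  "step d x \<theta> lam N K pol s =
     bind_pmf (pol s) (\<lambda>S.
     bind_pmf (Pi_pmf {..<K} None (\<lambda>k. mnl_choice d x (S k) (\<theta> k))) (\<lambda>c.
     bind_pmf (Pi_pmf {..<N} False (\<lambda>n. bernoulli_pmf (lam n))) (\<lambda>a.
       let dep = (\<lambda>n. \<exists>k<K. c k = Some n) in
       return_pmf (fst s @ [(snd s, S, dep, a)],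
                   \<lambda>n. (snd s n + of_bool (a n)) - of_bool (dep n)))))"

text \<open>traj ... t is the distribution of the state at time t+1 (paper's indexing); Q(1) = 0.\<close>
fun traj :: "nat \<Rightarrow> (nat \<Rightarrow> nat \<Rightarrow> real) \<Rightarrow> (nat \<Rightarrow> nat \<Rightarrow> real) \<Rightarrow> (nat \<Rightarrow> real) \<Rightarrow> nat \<Rightarrow> nat
     \<Rightarrow> (hist \<Rightarrow> (nat \<Rightarrow> nat set) pmf) \<Rightarrow> nat \<Rightarrow> hist pmf" where
  "traj d x \<theta> lam N K pol 0 = return_pmf ([], \<lambda>_. 0)"
| "traj d x \<theta> lam N K pol (Suc t) = bind_pmf (traj d x \<theta> lam N K pol t) (step d x \<theta> lam N K pol)"

definition avg_queue :: "nat \<Rightarrow> (nat \<Rightarrow> nat \<Rightarrow> real) \<Rightarrow> (nat \<Rightarrow> nat \<Rightarrow> real) \<Rightarrow> (nat \<Rightarrow> real) \<Rightarrow> nat \<Rightarrow> nat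
     \<Rightarrow> (hist \<Rightarrow> (nat \<Rightarrow> nat set) pmf) \<Rightarrow> nat \<Rightarrow> real" where
  "avg_queue d x \<theta> lam N K pol T =
     (1 / real T) * (\<Sum>t<T. \<Sum>n<N. measure_pmf.expectation (traj d x \<theta> lam N K pol t) (\<lambda>s. real (snd s n)))"

end

theory Submission
  imports Defs
begin

text \<open>
  Take the quadratic Lyapunov function \<open>V(Q) = \<Sum>\<^sub>n Q\<^sub>n\<^sup>2\<close>. One round changes it by at most
  \<open>\<Sum>\<^sub>n (2Q\<^sub>n + 1) A\<^sub>n + \<Sum>\<^sub>n (1 - 2Q\<^sub>n) D\<^sub>n\<close>, whose expectation, for the assortment chosen by
  MaxWeight, is \<open>\<Sum>\<^sub>n (2Q\<^sub>n + 1) \<lambda>\<^sub>n + (expected departures) - 2 \<cdot> (MaxWeight weight)\<close>.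
  Restricting the slack assortment to the nonempty queues only raises the MNL acceptance
  probabilities, so the MaxWeight weight is at least \<open>\<Sum>\<^sub>n Q\<^sub>n (\<lambda>\<^sub>n + \<epsilon>)\<close>; and both the total
  arrival rate and the expected number of departures are at most \<open>min N K\<close>, since each of the
  \<open>K\<close> arms accepts at most one of the \<open>N\<close> agents. Hence the expected drift is at most
  \<open>2 min N K - 2\<epsilon> \<Sum>\<^sub>n Q\<^sub>n\<close>. Summing over \<open>T\<close> rounds, with \<open>V = 0\<close> initially, gives
  \<open>\<Sum>\<^sub>t<\<^sub>T \<Sum>\<^sub>n E[Q\<^sub>n(t)] \<le> T min N K / \<epsilon>\<close>, i.e. the bound with \<open>C = 1\<close>. The telescoping is done
  with nonnegative extended-real integrals, so no integrability of queue lengths is needed.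
\<close>

section \<open>Expectations over probability mass functions\<close>

lemma integrable_measure_pmf_bounded:
  "(\<And>x. \<bar>f x\<bar> \<le> B) \<Longrightarrow> integrable (measure_pmf p) (f :: _ \<Rightarrow> real)"
  by (rule measure_pmf.integrable_const_bound[where B=B]) auto

lemma expectation_of_bool_eq_pmf: "measure_pmf.expectation p (\<lambda>r. of_bool (r = v) :: real) = pmf p v"
proof -
  have "(\<lambda>r. of_bool (r = v) :: real) = indicator {v}" by (auto simp: indicator_def)
  then show ?thesis by (simp add: measure_pmf_single)
qed

lemma expectation_Pi_pmf_component:
  assumes "finite A" "k \<in> A"
  shows "measure_pmf.expectation (Pi_pmf A dflt p) (\<lambda>c. g (c k) :: real)
       = measure_pmf.expectation (p k) g"
proof -
  have "measure_pmf.expectation (Pi_pmf A dflt p) (\<lambda>c. g (c k))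
      = measure_pmf.expectation (map_pmf (\<lambda>c. c k) (Pi_pmf A dflt p)) g" by simp
  also have "map_pmf (\<lambda>c. c k) (Pi_pmf A dflt p) = p k"
    using assms by (subst Pi_pmf_component) auto
  finally show ?thesis .
qed

lemma ennreal_sum_expectation_le_nn_integral:
  fixes f :: "'i \<Rightarrow> 'a \<Rightarrow> real"
  assumes "finite I" and nonneg: "\<And>i x. 0 \<le> f i x"
  shows "ennreal (\<Sum>i\<in>I. measure_pmf.expectation p (f i)) \<le> (\<integral>\<^sup>+x. ennreal (\<Sum>i\<in>I. f i x) \<partial>p)"
proof -
  have "ennreal (\<Sum>i\<in>I. measure_pmf.expectation p (f i)) = (\<Sum>i\<in>I. ennreal (measure_pmf.expectation p (f i)))"
    using nonneg by (intro sum_ennreal[symmetric]) (simp add: Bochner_Integration.integral_nonneg)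
  also have "\<dots> \<le> (\<Sum>i\<in>I. \<integral>\<^sup>+x. ennreal (f i x) \<partial>p)"
  proof (intro sum_mono)
    fix i
    have "measure_pmf.expectation p (f i) = enn2real (\<integral>\<^sup>+x. ennreal (f i x) \<partial>p)"
      using nonneg by (intro integral_eq_nn_integral) auto
    then show "ennreal (measure_pmf.expectation p (f i)) \<le> (\<integral>\<^sup>+x. ennreal (f i x) \<partial>p)"
      by (simp add: ennreal_enn2real_if)
  qed
  also have "\<dots> = (\<integral>\<^sup>+x. (\<Sum>i\<in>I. ennreal (f i x)) \<partial>p)"
    by (intro nn_integral_sum[symmetric]) auto
  also have "\<dots> = (\<integral>\<^sup>+x. ennreal (\<Sum>i\<in>I. f i x) \<partial>p)"
    using nonneg by (intro nn_integral_cong sum_ennreal) auto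
  finally show ?thesis .
qed

lemma nn_integral_iterate_drift_le:
  fixes V f :: "'a \<Rightarrow> ennreal" and p :: "nat \<Rightarrow> 'a pmf" and Q :: "'a \<Rightarrow> 'a pmf"
  assumes p: "\<And>t. p (Suc t) = p t \<bind> Q"
    and drift: "\<And>s. (\<integral>\<^sup>+s'. V s' \<partial>Q s) + f s \<le> V s + c"
  shows "(\<Sum>t<T. \<integral>\<^sup>+s. f s \<partial>p t) + (\<integral>\<^sup>+s. V s \<partial>p T) \<le> (\<integral>\<^sup>+s. V s \<partial>p 0) + of_nat T * c"
proof (induction T)
  case (Suc T)
  have "(\<integral>\<^sup>+s. V s \<partial>p (Suc T)) + (\<integral>\<^sup>+s. f s \<partial>p T) = (\<integral>\<^sup>+s. (\<integral>\<^sup>+s'. V s' \<partial>Q s) + f s \<partial>p T)"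
    by (simp add: p nn_integral_bind_pmf nn_integral_add)
  also have "\<dots> \<le> (\<integral>\<^sup>+s. V s + c \<partial>p T)"
    by (intro nn_integral_mono drift)
  also have "\<dots> = (\<integral>\<^sup>+s. V s \<partial>p T) + c"
    by (simp add: nn_integral_add)
  finally have "(\<Sum>t<Suc T. \<integral>\<^sup>+s. f s \<partial>p t) + (\<integral>\<^sup>+s. V s \<partial>p (Suc T))
      \<le> ((\<Sum>t<T. \<integral>\<^sup>+s. f s \<partial>p t) + (\<integral>\<^sup>+s. V s \<partial>p T)) + c"
    by (simp add: ac_simps add_left_mono)
  also have "\<dots> \<le> ((\<integral>\<^sup>+s. V s \<partial>p 0) + of_nat T * c) + c"
    using Suc.IH by (rule add_right_mono)
  also have "\<dots> = (\<integral>\<^sup>+s. V s \<partial>p 0) + of_nat (Suc T) * c"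
    by (simp add: algebra_simps)
  finally show ?case .
qed simp

section \<open>Multinomial logit choice\<close>

lemma mnl_denominator_pos: "0 < 1 + (\<Sum>m\<in>S. exp (ip d (x m) th))"
  by (simp add: add_pos_nonneg sum_nonneg)

lemma mnl_nonneg: "0 \<le> mnl d x S th n"
  unfolding mnl_def using mnl_denominator_pos[of d x th S] by simp

lemma mnl0_nonneg: "0 \<le> mnl0 d x S th"
  unfolding mnl0_def using mnl_denominator_pos[of d x th S] by simp

lemma mnl_le_1:
  assumes "finite S" "n \<in> S"
  shows "mnl d x S th n \<le> 1"
proof -
  have "exp (ip d (x n) th) \<le> (\<Sum>m\<in>S. exp (ip d (x m) th))"
    using assms by (intro member_le_sum) auto
  then show ?thesis
    unfolding mnl_def using mnl_denominator_pos[of d x th S] by simp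
qed

lemma sum_mnl: "(\<Sum>n\<in>S. mnl d x S th n)
    = (\<Sum>m\<in>S. exp (ip d (x m) th)) / (1 + (\<Sum>m\<in>S. exp (ip d (x m) th)))"
  unfolding mnl_def by (simp add: sum_divide_distrib)

lemma sum_mnl_le_1: "(\<Sum>n\<in>S. mnl d x S th n) \<le> 1"
  unfolding sum_mnl using mnl_denominator_pos[of d x th S] by simp

lemma mnl0_plus_sum_mnl: "mnl0 d x S th + (\<Sum>n\<in>S. mnl d x S th n) = 1"
  unfolding sum_mnl mnl0_def using mnl_denominator_pos[of d x th S]
  by (simp add: field_simps)

lemma mnl_antimono:
  assumes "finite S" "S' \<subseteq> S"
  shows "mnl d x S th n \<le> mnl d x S' th n"
proof -
  have "(\<Sum>m\<in>S'. exp (ip d (x m) th)) \<le> (\<Sum>m\<in>S. exp (ip d (x m) th))"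
    using assms by (intro sum_mono2) auto
  then show ?thesis
    unfolding mnl_def using mnl_denominator_pos[of d x th S'] by (intro divide_left_mono) auto
qed

lemma pmf_mnl_choice:
  assumes "finite S"
  shows "pmf (mnl_choice d x S th) r =
    (case r of None \<Rightarrow> mnl0 d x S th | Some n \<Rightarrow> if n \<in> S then mnl d x S th n else 0)"
proof -
  let ?f = "\<lambda>r. case r of None \<Rightarrow> mnl0 d x S th | Some n \<Rightarrow> if n \<in> S then mnl d x S th n else 0"
  have nonneg: "0 \<le> ?f r" for r
    using mnl_nonneg mnl0_nonneg by (simp split: option.split)
  have "(\<integral>\<^sup>+r. ?f r \<partial>count_space UNIV) = (\<Sum>r\<in>insert None (Some ` S). ennreal (?f r))"
    using assms by (intro nn_integral_count_space') (auto split: option.split)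
  also have "\<dots> = ennreal (mnl0 d x S th + (\<Sum>n\<in>S. mnl d x S th n))"
    using assms nonneg by (simp add: sum.reindex sum_ennreal[symmetric])
  finally have "(\<integral>\<^sup>+r. ?f r \<partial>count_space UNIV) = 1"
    by (simp add: mnl0_plus_sum_mnl)
  with nonneg show ?thesis
    unfolding mnl_choice_def by (intro pmf_embed_pmf) auto
qed

lemma set_pmf_mnl_choice: "finite S \<Longrightarrow> set_pmf (mnl_choice d x S th) \<subseteq> insert None (Some ` S)"
  by (auto simp: set_pmf_iff pmf_mnl_choice split: option.splits if_splits)

section \<open>Assortments and the MaxWeight weight\<close>

lemma assortmentsD:
  assumes "S \<in> assortments K L A"
  shows "k < K \<Longrightarrow> S k \<subseteq> A" "k < K \<Longrightarrow> card (S k) \<le> L"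
    "k < K \<Longrightarrow> k' < K \<Longrightarrow> k \<noteq> k' \<Longrightarrow> S k \<inter> S k' = {}" "(\<Union>k<K. S k) = A"
  using assms unfolding assortments_def by auto

lemma sum_over_assortment:
  assumes "S \<in> assortments K L A" "finite A"
  shows "(\<Sum>n\<in>A. f n) = (\<Sum>k<K. \<Sum>n\<in>S k. f n)"
proof -
  have "(\<Sum>n\<in>A. f n) = (\<Sum>n\<in>(\<Union>k<K. S k). f n)" using assortmentsD(4)[OF assms(1)] by simp
  also have "\<dots> = (\<Sum>k<K. \<Sum>n\<in>S k. f n)"
    using assortmentsD[OF assms(1)] assms(2) by (intro sum.UNION_disjoint) (auto intro: finite_subset)
  finally show ?thesis .
qed

lemma assortment_restrict:
  assumes S: "S \<in> assortments K L B" and "finite B" "A \<subseteq> B"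
  shows "(\<lambda>k. S k \<inter> A) \<in> assortments K L A"
proof -
  have "card (S k \<inter> A) \<le> L" if "k < K" for k
    using card_mono[of "S k" "S k \<inter> A"] assortmentsD(1,2)[OF S that] \<open>finite B\<close>
    by (meson Int_lower1 finite_subset le_trans)
  moreover have "(S k \<inter> A) \<inter> (S k' \<inter> A) = {}" if "k < K" "k' < K" "k \<noteq> k'" for k k'
    using assortmentsD(3)[OF S that] by blast
  moreover have "(\<Union>k<K. S k \<inter> A) = A"
    using assortmentsD(4)[OF S] \<open>A \<subseteq> B\<close> by blast
  ultimately show ?thesis
    using S unfolding assortments_def by auto
qed

lemma finite_active: "finite (active N q)"
  by (simp add: active_def)

lemma card_active_le: "card (active N q) \<le> N"
  using card_mono[of "{..<N}" "active N q"] by (auto simp: active_def)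

lemma sum_mnl_over_assortment_le:
  assumes S: "S \<in> assortments K L A" and "finite A"
  shows "(\<Sum>k<K. \<Sum>n\<in>S k. mnl d x (S k) (\<theta> k) n) \<le> real (min (card A) K)"
proof -
  have fin: "finite (S k)" if "k < K" for k
    using assortmentsD(1)[OF S that] \<open>finite A\<close> by (rule finite_subset)
  have "(\<Sum>k<K. \<Sum>n\<in>S k. mnl d x (S k) (\<theta> k) n) \<le> (\<Sum>k<K. \<Sum>n\<in>S k. 1)"
    using fin mnl_le_1 by (intro sum_mono) auto
  also have "\<dots> = real (card A)"
    using sum_over_assortment[OF assms, of "\<lambda>_. 1::real"] by simp
  finally have "(\<Sum>k<K. \<Sum>n\<in>S k. mnl d x (S k) (\<theta> k) n) \<le> real (card A)" .
  moreover have "(\<Sum>k<K. \<Sum>n\<in>S k. mnl d x (S k) (\<theta> k) n) \<le> real K"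
    using sum_mono[of "{..<K}" "\<lambda>k. \<Sum>n\<in>S k. mnl d x (S k) (\<theta> k) n" "\<lambda>_. 1"] sum_mnl_le_1 by simp
  ultimately show ?thesis by (simp add: min_def)
qed

lemma maxweight_ge_slack_weight:
  fixes \<epsilon> :: real
  assumes S: "S \<in> maxweight_set d x \<theta> N K L q"
    and Ss: "Ss \<in> assortments K L {..<N}"
    and slack: "\<forall>k<K. \<forall>n\<in>Ss k. lam n + \<epsilon> \<le> mnl d x (Ss k) (\<theta> k) n"
  shows "(\<Sum>n<N. real (q n) * (lam n + \<epsilon>)) \<le> mw_weight d x \<theta> K q S"
proof -
  let ?A = "active N q"
  define S' where "S' = (\<lambda>k. Ss k \<inter> ?A)"
  have A_sub: "?A \<subseteq> {..<N}" by (auto simp: active_def)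
  then have S': "S' \<in> assortments K L ?A"
    unfolding S'_def by (intro assortment_restrict[OF Ss]) auto
  have "(\<Sum>n<N. real (q n) * (lam n + \<epsilon>)) = (\<Sum>n\<in>?A. real (q n) * (lam n + \<epsilon>))"
    by (rule sum.mono_neutral_right) (auto simp: active_def)
  also have "\<dots> = (\<Sum>k<K. \<Sum>n\<in>S' k. real (q n) * (lam n + \<epsilon>))"
    using A_sub by (intro sum_over_assortment[OF S']) (auto intro: finite_subset)
  also have "\<dots> \<le> mw_weight d x \<theta> K q S'"
    unfolding mw_weight_def
  proof (intro sum_mono mult_left_mono)
    fix k n assume "k \<in> {..<K}" "n \<in> S' k"
    then have "lam n + \<epsilon> \<le> mnl d x (Ss k) (\<theta> k) n" using slack unfolding S'_def by auto
    also have "\<dots> \<le> mnl d x (S' k) (\<theta> k) n"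
      using assortmentsD(1)[OF Ss] \<open>k \<in> {..<K}\<close> unfolding S'_def
      by (intro mnl_antimono) (auto intro: finite_subset)
    finally show "lam n + \<epsilon> \<le> mnl d x (S' k) (\<theta> k) n" .
  qed simp
  also have "\<dots> \<le> mw_weight d x \<theta> K q S"
    using S S' unfolding maxweight_set_def by auto
  finally show ?thesis .
qed

section \<open>Expected arrivals and departures\<close>

abbreviation arrival_pmf :: "nat \<Rightarrow> (nat \<Rightarrow> real) \<Rightarrow> (nat \<Rightarrow> bool) pmf" where
  "arrival_pmf N lam \<equiv> Pi_pmf {..<N} False (\<lambda>n. bernoulli_pmf (lam n))"

abbreviation acceptance_pmf :: "nat \<Rightarrow> (nat \<Rightarrow> nat \<Rightarrow> real) \<Rightarrow> (nat \<Rightarrow> nat \<Rightarrow> real) \<Rightarrow> nat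
    \<Rightarrow> (nat \<Rightarrow> nat set) \<Rightarrow> (nat \<Rightarrow> nat option) pmf" where
  "acceptance_pmf d x \<theta> K S \<equiv> Pi_pmf {..<K} None (\<lambda>k. mnl_choice d x (S k) (\<theta> k))"

lemma expectation_weighted_arrivals:
  assumes "\<And>n. n < N \<Longrightarrow> 0 \<le> lam n \<and> lam n \<le> 1"
  shows "measure_pmf.expectation (arrival_pmf N lam) (\<lambda>a. \<Sum>n<N. w n * of_bool (a n))
       = (\<Sum>n<N. w n * lam n)"
proof -
  have "integrable (arrival_pmf N lam) (\<lambda>a. w n * of_bool (a n))" for n
    by (rule integrable_measure_pmf_bounded[where B="\<bar>w n\<bar>"]) auto
  then have "measure_pmf.expectation (arrival_pmf N lam) (\<lambda>a. \<Sum>n<N. w n * of_bool (a n))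
      = (\<Sum>n<N. w n * measure_pmf.expectation (arrival_pmf N lam) (\<lambda>a. of_bool (a n)))"
    by (subst Bochner_Integration.integral_sum) auto
  also have "\<dots> = (\<Sum>n<N. w n * lam n)"
    using assms by (intro sum.cong refl) (simp add: expectation_Pi_pmf_component)
  finally show ?thesis .
qed

lemma acceptance_pmf_component:
  assumes "c \<in> set_pmf (acceptance_pmf d x \<theta> K S)" "k < K" "finite (S k)"
  shows "c k \<in> insert None (Some ` S k)"
  using assms set_pmf_mnl_choice[OF assms(3), of d x "\<theta> k"]
  by (auto simp: set_Pi_pmf PiE_dflt_def)

lemma of_bool_accepted_eq_sum:
  fixes K :: nat
  assumes c: "\<And>k. k < K \<Longrightarrow> c k \<in> insert None (Some ` S k)"
    and disj: "\<And>k k'. k < K \<Longrightarrow> k' < K \<Longrightarrow> k \<noteq> k' \<Longrightarrow> S k \<inter> S k' = {}"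
  shows "(of_bool (\<exists>k<K. c k = Some n) :: real) = (\<Sum>k<K. of_bool (c k = Some n))"
proof (cases "\<exists>k<K. c k = Some n")
  case True
  then obtain k0 where k0: "k0 < K" "c k0 = Some n" by blast
  have "(\<Sum>k<K. of_bool (c k = Some n) :: real) = (\<Sum>k<K. if k = k0 then 1 else 0)"
  proof (intro sum.cong refl)
    fix k assume "k \<in> {..<K}"
    then show "(of_bool (c k = Some n) :: real) = (if k = k0 then 1 else 0)"
      using c[of k] c[OF k0(1)] disj[of k k0] k0 by auto
  qed
  also have "\<dots> = 1" using k0(1) by simp
  finally show ?thesis using True by simp
qed simp

lemma expectation_accepted:
  assumes fin: "\<And>k. k < K \<Longrightarrow> finite (S k)"
    and disj: "\<And>k k'. k < K \<Longrightarrow> k' < K \<Longrightarrow> k \<noteq> k' \<Longrightarrow> S k \<inter> S k' = {}"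
  shows "measure_pmf.expectation (acceptance_pmf d x \<theta> K S) (\<lambda>c. of_bool (\<exists>k<K. c k = Some n))
       = (\<Sum>k<K. if n \<in> S k then mnl d x (S k) (\<theta> k) n else 0)"
proof -
  let ?P = "acceptance_pmf d x \<theta> K S"
  have ae: "AE c in ?P. (of_bool (\<exists>k<K. c k = Some n) :: real) = (\<Sum>k<K. of_bool (c k = Some n))"
  proof (rule AE_pmfI)
    fix c assume "c \<in> set_pmf ?P"
    with fin show "(of_bool (\<exists>k<K. c k = Some n) :: real) = (\<Sum>k<K. of_bool (c k = Some n))"
      by (intro of_bool_accepted_eq_sum[where S=S] disj acceptance_pmf_component)
  qed
  have "measure_pmf.expectation ?P (\<lambda>c. of_bool (\<exists>k<K. c k = Some n) :: real)
      = measure_pmf.expectation ?P (\<lambda>c. \<Sum>k<K. of_bool (c k = Some n))"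
    by (rule integral_cong_AE[OF _ _ ae]) simp_all
  also have "\<dots> = (\<Sum>k<K. measure_pmf.expectation ?P (\<lambda>c. of_bool (c k = Some n)))"
    by (intro Bochner_Integration.integral_sum integrable_measure_pmf_bounded[where B=1]) auto
  also have "\<dots> = (\<Sum>k<K. if n \<in> S k then mnl d x (S k) (\<theta> k) n else 0)"
  proof (intro sum.cong refl)
    fix k assume "k \<in> {..<K}"
    then show "measure_pmf.expectation ?P (\<lambda>c. of_bool (c k = Some n))
        = (if n \<in> S k then mnl d x (S k) (\<theta> k) n else 0)"
      using expectation_Pi_pmf_component[of "{..<K}" k None _ "\<lambda>r. of_bool (r = Some n)"] fin
      by (simp add: expectation_of_bool_eq_pmf pmf_mnl_choice)
  qed
  finally show ?thesis .
qed

lemma expectation_weighted_departures: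
  assumes sub: "\<And>k. k < K \<Longrightarrow> S k \<subseteq> {..<N}"
    and disj: "\<And>k k'. k < K \<Longrightarrow> k' < K \<Longrightarrow> k \<noteq> k' \<Longrightarrow> S k \<inter> S k' = {}"
  shows "measure_pmf.expectation (acceptance_pmf d x \<theta> K S)
           (\<lambda>c. \<Sum>n<N. w n * of_bool (\<exists>k<K. c k = Some n))
       = (\<Sum>k<K. \<Sum>n\<in>S k. w n * mnl d x (S k) (\<theta> k) n)"
proof -
  let ?P = "acceptance_pmf d x \<theta> K S"
  have fin: "\<And>k. k < K \<Longrightarrow> finite (S k)" using sub finite_subset by blast
  have "measure_pmf.expectation ?P (\<lambda>c. \<Sum>n<N. w n * of_bool (\<exists>k<K. c k = Some n))
      = (\<Sum>n<N. w n * measure_pmf.expectation ?P (\<lambda>c. of_bool (\<exists>k<K. c k = Some n)))"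
  proof -
    have "integrable ?P (\<lambda>c. of_bool (\<exists>k<K. c k = Some n) :: real)" for n
      by (rule integrable_measure_pmf_bounded[where B=1]) auto
    then show ?thesis by (subst Bochner_Integration.integral_sum) auto
  qed
  also have "\<dots> = (\<Sum>n<N. \<Sum>k<K. if n \<in> S k then w n * mnl d x (S k) (\<theta> k) n else 0)"
    by (simp add: expectation_accepted[OF fin disj] sum_distrib_left if_distrib cong: if_cong)
  also have "\<dots> = (\<Sum>k<K. \<Sum>n\<in>S k. w n * mnl d x (S k) (\<theta> k) n)"
    using sub by (subst sum.swap) (simp add: sum.inter_restrict[symmetric] Int_absorb1)
  finally show ?thesis .
qed

section \<open>Lyapunov drift\<close>

definition lyapunov :: "nat \<Rightarrow> (nat \<Rightarrow> nat) \<Rightarrow> real" where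
  "lyapunov N q = (\<Sum>n<N. (real (q n))\<^sup>2)"

definition queue_update :: "nat \<Rightarrow> (nat \<Rightarrow> nat) \<Rightarrow> (nat \<Rightarrow> nat option) \<Rightarrow> (nat \<Rightarrow> bool) \<Rightarrow> nat \<Rightarrow> nat" where
  "queue_update K q c a = (\<lambda>n. (q n + of_bool (a n)) - of_bool (\<exists>k<K. c k = Some n))"

lemma lyapunov_nonneg: "0 \<le> lyapunov N q"
  unfolding lyapunov_def by (simp add: sum_nonneg)

lemma square_queue_update_le:
  "(real ((q + of_bool a) - of_bool b))\<^sup>2
     \<le> (real q)\<^sup>2 + (2 * real q + 1) * of_bool a + (1 - 2 * real q) * of_bool b"
  by (cases a; cases b; cases q) (auto simp: power2_eq_square algebra_simps)

lemma lyapunov_queue_update_le: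
  "lyapunov N (queue_update K q c a) \<le> lyapunov N q + (\<Sum>n<N. (2 * real (q n) + 1) * of_bool (a n))
     + (\<Sum>n<N. (1 - 2 * real (q n)) * of_bool (\<exists>k<K. c k = Some n))"
  unfolding lyapunov_def queue_update_def sum.distrib[symmetric]
  by (intro sum_mono square_queue_update_le)

lemma lyapunov_queue_update_bounded:
  "\<bar>lyapunov N (queue_update K q c a)\<bar> \<le> (\<Sum>n<N. (real (q n) + 1)\<^sup>2)"
proof -
  have "lyapunov N (queue_update K q c a) \<le> (\<Sum>n<N. (real (q n) + 1)\<^sup>2)"
    unfolding lyapunov_def queue_update_def by (intro sum_mono power_mono) auto
  then show ?thesis by (simp add: lyapunov_nonneg)
qed

lemma expectation_lyapunov_update_bounded:
  "\<bar>measure_pmf.expectation p (\<lambda>a. lyapunov N (queue_update K q c a))\<bar> \<le> (\<Sum>n<N. (real (q n) + 1)\<^sup>2)"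
proof -
  have "measure_pmf.expectation p (\<lambda>a. lyapunov N (queue_update K q c a)) \<le> (\<Sum>n<N. (real (q n) + 1)\<^sup>2)"
    using lyapunov_queue_update_bounded
    by (intro measure_pmf.integral_le_const AE_pmfI
        integrable_measure_pmf_bounded[OF lyapunov_queue_update_bounded]) (auto simp: abs_le_iff)
  then show ?thesis by (simp add: lyapunov_nonneg)
qed

lemma expected_lyapunov_update_le:
  fixes N K :: nat
  assumes sub: "\<And>k. k < K \<Longrightarrow> S k \<subseteq> {..<N}"
    and disj: "\<And>k k'. k < K \<Longrightarrow> k' < K \<Longrightarrow> k \<noteq> k' \<Longrightarrow> S k \<inter> S k' = {}"
    and lam: "\<And>n. n < N \<Longrightarrow> 0 \<le> lam n \<and> lam n \<le> 1"
  shows "measure_pmf.expectation (acceptance_pmf d x \<theta> K S)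
           (\<lambda>c. measure_pmf.expectation (arrival_pmf N lam) (\<lambda>a. lyapunov N (queue_update K q c a)))
     \<le> lyapunov N q + (\<Sum>n<N. (2 * real (q n) + 1) * lam n)
        + (\<Sum>k<K. \<Sum>n\<in>S k. (1 - 2 * real (q n)) * mnl d x (S k) (\<theta> k) n)"
proof -
  let ?P = "acceptance_pmf d x \<theta> K S" and ?A = "arrival_pmf N lam"
  let ?V = "\<lambda>c a. lyapunov N (queue_update K q c a)"
  let ?arr = "\<lambda>a. \<Sum>n<N. (2 * real (q n) + 1) * of_bool (a n)"
  let ?dep = "\<lambda>c. \<Sum>n<N. (1 - 2 * real (q n)) * of_bool (\<exists>k<K. c k = Some n)"
  have int_V: "integrable (measure_pmf p) (?V c)" for p c
    using lyapunov_queue_update_bounded by (rule integrable_measure_pmf_bounded)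
  have int_arr: "integrable (measure_pmf p) ?arr" for p
    by (rule integrable_measure_pmf_bounded[where B="\<Sum>n<N. \<bar>2 * real (q n) + 1\<bar>"])
      (rule order_trans[OF sum_abs], rule sum_mono, simp)
  have int_dep: "integrable (measure_pmf p) ?dep" for p
    by (rule integrable_measure_pmf_bounded[where B="\<Sum>n<N. \<bar>1 - 2 * real (q n)\<bar>"])
      (rule order_trans[OF sum_abs], rule sum_mono, simp)
  have int_EV: "integrable (measure_pmf p) (\<lambda>c. measure_pmf.expectation ?A (?V c))" for p
    using expectation_lyapunov_update_bounded by (rule integrable_measure_pmf_bounded)
  have arrivals: "measure_pmf.expectation ?A (?V c)
      \<le> lyapunov N q + (\<Sum>n<N. (2 * real (q n) + 1) * lam n) + ?dep c" for c
  proof -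
    have "measure_pmf.expectation ?A (?V c)
        \<le> measure_pmf.expectation ?A (\<lambda>a. lyapunov N q + ?arr a + ?dep c)"
      using int_V int_arr lyapunov_queue_update_le by (intro integral_mono) auto
    also have "\<dots> = lyapunov N q + measure_pmf.expectation ?A ?arr + ?dep c"
      using int_arr by simp
    also have "measure_pmf.expectation ?A ?arr = (\<Sum>n<N. (2 * real (q n) + 1) * lam n)"
      by (rule expectation_weighted_arrivals) (rule lam)
    finally show ?thesis .
  qed
  have "measure_pmf.expectation ?P (\<lambda>c. measure_pmf.expectation ?A (?V c))
      \<le> measure_pmf.expectation ?P (\<lambda>c. lyapunov N q + (\<Sum>n<N. (2 * real (q n) + 1) * lam n) + ?dep c)"
    using int_EV int_dep arrivals by (intro integral_mono) auto
  also have "\<dots> = lyapunov N q + (\<Sum>n<N. (2 * real (q n) + 1) * lam n) + measure_pmf.expectation ?P ?dep"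
    using int_dep by simp
  also have "measure_pmf.expectation ?P ?dep
      = (\<Sum>k<K. \<Sum>n\<in>S k. (1 - 2 * real (q n)) * mnl d x (S k) (\<theta> k) n)"
    by (rule expectation_weighted_departures[OF sub disj])
  finally show ?thesis .
qed

lemma maxweight_drift_le:
  fixes \<epsilon> :: real
  assumes S: "S \<in> maxweight_set d x \<theta> N K L q"
    and Ss: "Ss \<in> assortments K L {..<N}"
    and slack: "\<forall>k<K. \<forall>n\<in>Ss k. lam n + \<epsilon> \<le> mnl d x (Ss k) (\<theta> k) n"
    and "0 \<le> \<epsilon>"
  shows "(\<Sum>n<N. (2 * real (q n) + 1) * lam n)
      + (\<Sum>k<K. \<Sum>n\<in>S k. (1 - 2 * real (q n)) * mnl d x (S k) (\<theta> k) n)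
      + 2 * \<epsilon> * (\<Sum>n<N. real (q n)) \<le> 2 * real (min N K)"
proof -
  let ?mnl = "\<lambda>S k n. mnl d x (S k) (\<theta> k) n"
  let ?served = "\<Sum>k<K. \<Sum>n\<in>S k. ?mnl S k n"
  have SA: "S \<in> assortments K L (active N q)"
    using S unfolding maxweight_set_def by auto
  have "(\<Sum>k<K. \<Sum>n\<in>S k. (1 - 2 * real (q n)) * ?mnl S k n) = ?served - 2 * mw_weight d x \<theta> K q S"
    unfolding mw_weight_def by (simp add: algebra_simps sum_subtractf sum_distrib_left)
  moreover have "(\<Sum>n<N. (2 * real (q n) + 1) * lam n) + 2 * \<epsilon> * (\<Sum>n<N. real (q n))
      = 2 * (\<Sum>n<N. real (q n) * (lam n + \<epsilon>)) + (\<Sum>n<N. lam n)"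
    by (simp add: algebra_simps sum.distrib sum_distrib_left)
  moreover have "(\<Sum>n<N. real (q n) * (lam n + \<epsilon>)) \<le> mw_weight d x \<theta> K q S"
    by (rule maxweight_ge_slack_weight[OF S Ss slack])
  moreover have "?served \<le> real (min N K)"
  proof -
    have "?served \<le> real (min (card (active N q)) K)"
      by (rule sum_mnl_over_assortment_le[OF SA finite_active])
    also have "\<dots> \<le> real (min N K)"
      using card_active_le[of N q] by simp
    finally show ?thesis .
  qed
  moreover have "(\<Sum>n<N. lam n) \<le> real (min N K)"
  proof -
    have "(\<Sum>n<N. lam n) = (\<Sum>k<K. \<Sum>n\<in>Ss k. lam n)"
      by (rule sum_over_assortment[OF Ss]) simp
    also have "\<dots> \<le> (\<Sum>k<K. \<Sum>n\<in>Ss k. ?mnl Ss k n)"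
      using slack \<open>0 \<le> \<epsilon>\<close> by (intro sum_mono) fastforce
    also have "\<dots> \<le> real (min N K)"
      using sum_mnl_over_assortment_le[OF Ss, of d x \<theta>] by simp
    finally show ?thesis .
  qed
  ultimately show ?thesis by linarith
qed

lemma maxweight_expected_drift:
  fixes \<epsilon> :: real
  assumes S: "S \<in> maxweight_set d x \<theta> N K L q"
    and Ss: "Ss \<in> assortments K L {..<N}"
    and slack: "\<forall>k<K. \<forall>n\<in>Ss k. lam n + \<epsilon> \<le> mnl d x (Ss k) (\<theta> k) n"
    and lam: "\<And>n. n < N \<Longrightarrow> 0 \<le> lam n \<and> lam n \<le> 1"
    and "0 \<le> \<epsilon>"
  shows "measure_pmf.expectation (acceptance_pmf d x \<theta> K S)
           (\<lambda>c. measure_pmf.expectation (arrival_pmf N lam) (\<lambda>a. lyapunov N (queue_update K q c a)))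
         + 2 * \<epsilon> * (\<Sum>n<N. real (q n)) \<le> lyapunov N q + 2 * real (min N K)"
proof -
  have SA: "S \<in> assortments K L (active N q)"
    using S unfolding maxweight_set_def by auto
  have sub: "\<And>k. k < K \<Longrightarrow> S k \<subseteq> {..<N}"
    using assortmentsD(1)[OF SA] by (auto simp: active_def)
  have disj: "\<And>k k'. k < K \<Longrightarrow> k' < K \<Longrightarrow> k \<noteq> k' \<Longrightarrow> S k \<inter> S k' = {}"
    by (rule assortmentsD(3)[OF SA])
  have "measure_pmf.expectation (acceptance_pmf d x \<theta> K S)
           (\<lambda>c. measure_pmf.expectation (arrival_pmf N lam) (\<lambda>a. lyapunov N (queue_update K q c a)))
     \<le> lyapunov N q + (\<Sum>n<N. (2 * real (q n) + 1) * lam n)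
        + (\<Sum>k<K. \<Sum>n\<in>S k. (1 - 2 * real (q n)) * mnl d x (S k) (\<theta> k) n)"
    using sub disj lam by (rule expected_lyapunov_update_le)
  with maxweight_drift_le[OF S Ss slack \<open>0 \<le> \<epsilon>\<close>] show ?thesis by linarith
qed

lemma nn_integral_step_lyapunov_le:
  fixes \<epsilon> :: real
  assumes pol: "set_pmf (pol s) \<subseteq> maxweight_set d x \<theta> N K L (snd s)"
    and Ss: "Ss \<in> assortments K L {..<N}"
    and slack: "\<forall>k<K. \<forall>n\<in>Ss k. lam n + \<epsilon> \<le> mnl d x (Ss k) (\<theta> k) n"
    and lam: "\<And>n. n < N \<Longrightarrow> 0 \<le> lam n \<and> lam n \<le> 1"
    and "0 \<le> \<epsilon>"
  shows "(\<integral>\<^sup>+s'. lyapunov N (snd s') \<partial>step d x \<theta> lam N K pol s)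
           + ennreal (2 * \<epsilon> * (\<Sum>n<N. real (snd s n)))
         \<le> ennreal (lyapunov N (snd s)) + ennreal (2 * real (min N K))"
proof -
  let ?q = "snd s" and ?A = "arrival_pmf N lam"
  let ?V = "\<lambda>c a. lyapunov N (queue_update K ?q c a)"
  let ?drift = "ennreal (2 * \<epsilon> * (\<Sum>n<N. real (?q n)))"
  let ?bound = "ennreal (lyapunov N ?q) + ennreal (2 * real (min N K))"
  have unfold_step: "(\<integral>\<^sup>+s'. lyapunov N (snd s') \<partial>step d x \<theta> lam N K pol s)
      = (\<integral>\<^sup>+S. \<integral>\<^sup>+c. \<integral>\<^sup>+a. ennreal (?V c a) \<partial>?A \<partial>acceptance_pmf d x \<theta> K S \<partial>pol s)"
    unfolding step_def by (simp add: Let_def queue_update_def)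
  have per_assortment: "(\<integral>\<^sup>+c. \<integral>\<^sup>+a. ennreal (?V c a) \<partial>?A \<partial>acceptance_pmf d x \<theta> K S) + ?drift \<le> ?bound"
    if "S \<in> set_pmf (pol s)" for S
  proof -
    let ?P = "acceptance_pmf d x \<theta> K S"
    let ?E = "measure_pmf.expectation ?P (\<lambda>c. measure_pmf.expectation ?A (?V c))"
    have "(\<integral>\<^sup>+c. \<integral>\<^sup>+a. ennreal (?V c a) \<partial>?A \<partial>?P) = (\<integral>\<^sup>+c. measure_pmf.expectation ?A (?V c) \<partial>?P)"
      by (intro nn_integral_cong nn_integral_eq_integral
          integrable_measure_pmf_bounded[OF lyapunov_queue_update_bounded]) (simp add: lyapunov_nonneg)
    also have "\<dots> = ennreal ?E"
      by (intro nn_integral_eq_integral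
          integrable_measure_pmf_bounded[OF expectation_lyapunov_update_bounded])
        (simp add: lyapunov_nonneg)
    finally have nn_eq: "(\<integral>\<^sup>+c. \<integral>\<^sup>+a. ennreal (?V c a) \<partial>?A \<partial>?P) = ennreal ?E" .
    have "ennreal ?E + ?drift = ennreal (?E + 2 * \<epsilon> * (\<Sum>n<N. real (?q n)))"
      using \<open>0 \<le> \<epsilon>\<close> by (intro ennreal_plus[symmetric]) (simp_all add: lyapunov_nonneg sum_nonneg)
    also have "\<dots> \<le> ennreal (lyapunov N ?q + 2 * real (min N K))"
      using pol that by (intro ennreal_leI maxweight_expected_drift[OF _ Ss slack lam \<open>0 \<le> \<epsilon>\<close>]) auto
    also have "\<dots> = ?bound"
      by (intro ennreal_plus) (simp_all add: lyapunov_nonneg)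
    finally show ?thesis unfolding nn_eq .
  qed
  have "(\<integral>\<^sup>+s'. lyapunov N (snd s') \<partial>step d x \<theta> lam N K pol s) + ?drift
      = (\<integral>\<^sup>+S. (\<integral>\<^sup>+c. \<integral>\<^sup>+a. ennreal (?V c a) \<partial>?A \<partial>acceptance_pmf d x \<theta> K S) + ?drift \<partial>pol s)"
    unfolding unfold_step by (simp add: nn_integral_add)
  also have "\<dots> \<le> (\<integral>\<^sup>+S. ?bound \<partial>pol s)"
    using per_assortment by (intro nn_integral_mono_AE AE_pmfI) auto
  finally show ?thesis by simp
qed

lemma sum_expected_queue_lengths_le:
  fixes \<epsilon> :: real
  assumes pol: "\<And>s. set_pmf (pol s) \<subseteq> maxweight_set d x \<theta> N K L (snd s)"
    and Ss: "Ss \<in> assortments K L {..<N}"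
    and slack: "\<forall>k<K. \<forall>n\<in>Ss k. lam n + \<epsilon> \<le> mnl d x (Ss k) (\<theta> k) n"
    and lam: "\<And>n. n < N \<Longrightarrow> 0 \<le> lam n \<and> lam n \<le> 1"
    and "0 < \<epsilon>"
  shows "(\<Sum>t<T. \<Sum>n<N. measure_pmf.expectation (traj d x \<theta> lam N K pol t) (\<lambda>s. real (snd s n)))
    \<le> real T * real (min N K) / \<epsilon>"
proof -
  let ?traj = "traj d x \<theta> lam N K pol"
  let ?X = "\<lambda>t. \<Sum>n<N. measure_pmf.expectation (?traj t) (\<lambda>s. real (snd s n))"
  let ?drift = "\<lambda>s. ennreal (2 * \<epsilon> * (\<Sum>n<N. real (snd s n)))"
  have drift: "(\<integral>\<^sup>+s'. lyapunov N (snd s') \<partial>step d x \<theta> lam N K pol s) + ?drift s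
      \<le> ennreal (lyapunov N (snd s)) + ennreal (2 * real (min N K))" for s
    by (rule nn_integral_step_lyapunov_le[where pol=pol and s=s, OF pol Ss slack lam
        less_imp_le[OF \<open>0 < \<epsilon>\<close>]])
  have "(\<Sum>t<T. \<integral>\<^sup>+s. ?drift s \<partial>?traj t)
      \<le> (\<Sum>t<T. \<integral>\<^sup>+s. ?drift s \<partial>?traj t) + (\<integral>\<^sup>+s. lyapunov N (snd s) \<partial>?traj T)"
    by (rule add_increasing2) simp_all
  also have "\<dots> \<le> (\<integral>\<^sup>+s. lyapunov N (snd s) \<partial>?traj 0) + of_nat T * ennreal (2 * real (min N K))"
    by (rule nn_integral_iterate_drift_le[OF _ drift]) simp
  also have "\<dots> = ennreal (real T * (2 * real (min N K)))"
    by (simp add: lyapunov_def ennreal_of_nat_eq_real_of_nat ennreal_mult)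
  finally have telescope: "(\<Sum>t<T. \<integral>\<^sup>+s. ?drift s \<partial>?traj t) \<le> ennreal (real T * (2 * real (min N K)))" .
  have "ennreal (2 * \<epsilon> * (\<Sum>t<T. ?X t)) = (\<Sum>t<T. ennreal (2 * \<epsilon> * ?X t))"
    unfolding sum_distrib_left using \<open>0 < \<epsilon>\<close>
    by (intro sum_ennreal[symmetric]) (simp add: sum_nonneg Bochner_Integration.integral_nonneg)
  also have "\<dots> \<le> (\<Sum>t<T. \<integral>\<^sup>+s. ?drift s \<partial>?traj t)"
  proof (rule sum_mono)
    fix t
    show "ennreal (2 * \<epsilon> * ?X t) \<le> (\<integral>\<^sup>+s. ?drift s \<partial>?traj t)"
      using ennreal_sum_expectation_le_nn_integral[of "{..<N}" "\<lambda>n s. 2 * \<epsilon> * real (snd s n)" "?traj t"]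
        \<open>0 < \<epsilon>\<close> by (simp add: sum_distrib_left)
  qed
  also note telescope
  finally have "2 * \<epsilon> * (\<Sum>t<T. ?X t) \<le> real T * (2 * real (min N K))"
    by (simp add: ennreal_le_iff)
  with \<open>0 < \<epsilon>\<close> show ?thesis
    by (simp add: field_simps)
qed

lemma avg_queue_maxweight_le:
  fixes \<epsilon> :: real
  assumes pol: "\<And>s. set_pmf (pol s) \<subseteq> maxweight_set d x \<theta> N K L (snd s)"
    and Ss: "Ss \<in> assortments K L {..<N}"
    and slack: "\<forall>k<K. \<forall>n\<in>Ss k. lam n + \<epsilon> \<le> mnl d x (Ss k) (\<theta> k) n"
    and lam: "\<And>n. n < N \<Longrightarrow> 0 \<le> lam n \<and> lam n \<le> 1"
    and "0 < \<epsilon>" "1 \<le> T"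
  shows "avg_queue d x \<theta> lam N K pol T \<le> real (min N K) / \<epsilon>"
proof -
  have "avg_queue d x \<theta> lam N K pol T
      = (\<Sum>t<T. \<Sum>n<N. measure_pmf.expectation (traj d x \<theta> lam N K pol t) (\<lambda>s. real (snd s n))) / real T"
    unfolding avg_queue_def by simp
  also have "\<dots> \<le> (real T * real (min N K) / \<epsilon>) / real T"
    using sum_expected_queue_lengths_le[OF pol Ss slack lam \<open>0 < \<epsilon>\<close>] \<open>1 \<le> T\<close>
    by (intro divide_right_mono) auto
  also have "\<dots> = real (min N K) / \<epsilon>"
    using \<open>1 \<le> T\<close> by simp
  finally show ?thesis .
qed

theorem proposition1:
  shows "\<exists>C>0. \<forall>(N::nat) (K::nat) (L::nat) (d::nat) (x::nat \<Rightarrow> nat \<Rightarrow> real) (\<theta>::nat \<Rightarrow> nat \<Rightarrow> real)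
            (lam::nat \<Rightarrow> real) (\<epsilon>::real) (pol::hist \<Rightarrow> (nat \<Rightarrow> nat set) pmf) (T::nat).
    1 \<le> N \<and> 1 \<le> K \<and> 1 \<le> L \<and> 1 \<le> d \<and> N \<le> K * L
    \<and> (\<forall>n<N. sqnorm d (x n) \<le> 1) \<and> (\<forall>k<K. sqnorm d (\<theta> k) \<le> 1)
    \<and> (\<exists>\<kappa>>0. \<forall>S. S \<subseteq> {..<N} \<and> card S \<le> L \<longrightarrow>
          (\<forall>n\<in>S. \<forall>th. sqnorm d th \<le> 1 \<longrightarrow> mnl d x S th n * mnl0 d x S th \<ge> \<kappa>))
    \<and> (\<forall>n<N. 0 \<le> lam n \<and> lam n \<le> 1)
    \<and> 0 < \<epsilon> \<and> \<epsilon> < 1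
    \<and> (\<exists>S\<in>assortments K L {..<N}. \<forall>k<K. \<forall>n\<in>S k. lam n + \<epsilon> \<le> mnl d x (S k) (\<theta> k) n)
    \<and> (\<forall>s. set_pmf (pol s) \<subseteq> maxweight_set d x \<theta> N K L (snd s))
    \<and> 1 \<le> T
    \<longrightarrow> avg_queue d x \<theta> lam N K pol T \<le> C * real (min N K) / \<epsilon>"
  by (rule exI[of _ 1], simp only: mult_1, intro conjI zero_less_one allI impI,
      elim conjE bexE exE, rule avg_queue_maxweight_le) blast+

end
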